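(* Let $q$ be a prime power and $k\ge3$, $u\ge2$, $h\ge1$ integers. Let $U_1,\dots,U_h$ be $u$-dimensional subspaces of $\mathbf F_q^k$ with $U_i\cap U_j=\{0\}$ for $i\ne j$, and assume $q^k-q^{k-1}>h(q^u-1)$. Let $U$ be the set of nonzero vectors of $\mathbf F_q^k$ not in $U_1\cup\dots\cup U_h$, let $\widetilde G$ be a matrix whose columns consist of exactly one representative of each class $\{\lambda\mathbf v:\lambda\in\mathbf F_q^*\}$, $\mathbf v\in U$, and let $\mathbf C$ be the linear code with generator matrix $\widetilde G$. If $h\le q^u$, then $\mathbf C$ is a linear $\big[\frac{(q^k-1)-h(q^u-1)}{q-1},\,k,\,q^{k-1}-hq^{u-1}\big]_q$ code (i.e., its minimum distance equals $q^{k-1}-hq^{u-1}$). *)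

theory Defs
  imports "HOL-Analysis.Analysis"
begin

definition hamming_wt :: "'a::zero ^ 'm::finite \<Rightarrow> nat" where
  "hamming_wt c = card {j. c $ j \<noteq> 0}"

text \<open>Minimum distance of a linear code = minimum weight of a nonzero codeword.\<close>
definition min_dist :: "('a::zero ^ 'm::finite) set \<Rightarrow> nat" where
  "min_dist C = Min {hamming_wt c | c. c \<in> C \<and> c \<noteq> 0}"

text \<open>Linear code generated by the k x N generator matrix G (rows indexed by 'n):
  all combinations x G of its rows.\<close>
definition gen_code :: "'a::field ^ 'm::finite ^ 'n::finite \<Rightarrow> ('a ^ 'm) set" where
  "gen_code G = range (\<lambda>x. x v* G)"

end

theory Submission
  imports Defs
begin

(* A codeword x G has one coordinate for each projective point of U, and that coordinate
   vanishes iff the point lies on the hyperplane x\<^sup>\<bottom>. Counting the nonzero vectors of U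
   off x\<^sup>\<bottom> -- all nonzero vectors off x\<^sup>\<bottom>, minus (q - 1) q^(u-1) for each U\<^sub>i not
   contained in x\<^sup>\<bottom> -- gives wt (x G) = q^(k-1) - m q^(u-1), where m is the number of such U\<^sub>i.
   Hence every nonzero codeword has weight at least q^(k-1) - h q^(u-1) > 0, so G has rank k,
   and the bound is attained by any x \<noteq> 0 outside all annihilators U\<^sub>i\<^sup>\<bottom>: these have
   q^(k-u) elements each, so for h \<le> q^u they cannot cover the q^k - 1 nonzero vectors. *)

definition dotp :: "'a::comm_ring ^ 'n::finite \<Rightarrow> 'a ^ 'n \<Rightarrow> 'a" where
  "dotp x v = (\<Sum>i\<in>UNIV. x $ i * v $ i)"

definition annihilator :: "('a::comm_ring ^ 'n::finite) set \<Rightarrow> ('a ^ 'n) set" where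
  "annihilator W = {x. \<forall>w\<in>W. dotp x w = 0}"

lemma dotp_commute: "dotp x v = dotp v x"
  by (simp add: dotp_def mult.commute)

lemma dotp_add_right: "dotp x (v + w) = dotp x v + dotp x w"
  by (simp add: dotp_def sum.distrib algebra_simps)

lemma dotp_diff_right: "dotp x (v - w) = dotp x v - dotp x w"
  by (simp add: dotp_def sum_subtractf algebra_simps)

lemma dotp_scale_right: "dotp x (c *s v) = c * dotp x v"
  by (simp add: dotp_def sum_distrib_left algebra_simps)

lemma dotp_zero_left [simp]: "dotp 0 v = 0"
  and dotp_zero_right [simp]: "dotp x 0 = 0"
  by (simp_all add: dotp_def)

lemma vector_matrix_mult_nth_column: "(x v* G) $ j = dotp x (column j G)"
  by (simp add: dotp_def vector_matrix_mult_def column_def)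

lemma zero_in_annihilator [simp]: "0 \<in> annihilator W"
  by (simp add: annihilator_def)

lemma hamming_wt_eq_0_iff [simp]: "hamming_wt c = 0 \<longleftrightarrow> c = 0"
  by (auto simp: hamming_wt_def vec_eq_iff)

lemma card_finite_field_ge_2: "CARD('a::{field,finite}) \<ge> 2"
  using card_mono[of UNIV "{0::'a, 1}"] by simp

lemma card_nonzero_scalars: "card {c::'a::{field,finite}. c \<noteq> 0} = CARD('a) - 1"
proof -
  have "{c::'a. c \<noteq> 0} = UNIV - {0}" by auto
  then show ?thesis by (simp add: card_Diff_subset)
qed

lemma card_subspace:
  fixes W :: "('a::{field,finite} ^ 'n::finite) set"
  assumes "vec.subspace W"
  shows "card W = CARD('a) ^ vec.dim W"
proof -
  obtain B where B: "B \<subseteq> W" "vec.independent B" "W \<subseteq> vec.span B" "card B = vec.dim W"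
    using vec.basis_exists[of W] by blast
  define comb where "comb = (\<lambda>c. \<Sum>v\<in>B. c v *s v)"
  let ?coeffs = "B \<rightarrow>\<^sub>E (UNIV :: 'a set)"
  have "W = vec.span B"
    using B assms vec.span_minimal by blast
  also have "\<dots> = range comb"
    unfolding comb_def by (simp add: vec.span_finite)
  also have "\<dots> = comb ` ?coeffs"
  proof -
    have "comb c \<in> comb ` ?coeffs" for c
    proof -
      have "comb c = comb (restrict c B)"
        unfolding comb_def by (rule sum.cong) auto
      moreover have "restrict c B \<in> ?coeffs" by simp
      ultimately show ?thesis by (rule image_eqI)
    qed
    then show ?thesis by auto
  qed
  finally have W: "W = comb ` ?coeffs" .
  have "inj_on comb ?coeffs"
  proof (rule inj_onI)
    fix c d assume c: "c \<in> ?coeffs" and d: "d \<in> ?coeffs" and "comb c = comb d"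
    then have "(\<Sum>v\<in>B. (c v - d v) *s v) = 0"
      unfolding comb_def by (simp add: vec.scale_left_diff_distrib sum_subtractf)
    then have "\<forall>v\<in>B. c v - d v = 0"
      using vec.independent_explicit_finite_subsets[THEN iffD1, OF B(2), rule_format, of B "\<lambda>v. c v - d v"]
      by simp
    then show "c = d"
      using c d by (auto simp: PiE_def extensional_def fun_eq_iff)
  qed
  then have "card W = card ?coeffs"
    by (simp add: W card_image)
  then show ?thesis
    by (simp add: card_PiE B(4))
qed

lemma card_dotp_nonzero_eq_card_dotp_zero:
  fixes W :: "('a::{field,finite} ^ 'n::finite) set"
  assumes W: "vec.subspace W" and w: "w \<in> W" "dotp x w \<noteq> 0"
  shows "card {v\<in>W. dotp x v \<noteq> 0} = (CARD('a) - 1) * card {v\<in>W. dotp x v = 0}"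
proof -
  define w1 where "w1 = (1 / dotp x w) *s w"
  have w1: "w1 \<in> W" "dotp x w1 = 1"
    using w vec.subspace_scale[OF W] by (auto simp: w1_def dotp_scale_right)
  let ?f = "\<lambda>(t, v). v + t *s w1" and ?g = "\<lambda>v. (dotp x v, v - dotp x v *s w1)"
  have "bij_betw ?f ({t. t \<noteq> 0} \<times> {v\<in>W. dotp x v = 0}) {v\<in>W. dotp x v \<noteq> 0}"
    by (rule bij_betw_byWitness[where f' = ?g])
      (use W w1 in \<open>auto simp: dotp_add_right dotp_diff_right dotp_scale_right
        intro!: vec.subspace_add vec.subspace_diff vec.subspace_scale\<close>)
  then have "card {v\<in>W. dotp x v \<noteq> 0} = card ({t::'a. t \<noteq> 0} \<times> {v\<in>W. dotp x v = 0})"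
    by (simp add: bij_betw_same_card)
  then show ?thesis
    by (simp add: card_cartesian_product card_nonzero_scalars)
qed

lemma card_subspace_dotp_nonzero:
  fixes W :: "('a::{field,finite} ^ 'n::finite) set"
  assumes W: "vec.subspace W" and w: "w \<in> W" "dotp x w \<noteq> 0"
  shows "card {v\<in>W. dotp x v \<noteq> 0} = (CARD('a) - 1) * CARD('a) ^ (vec.dim W - 1)"
proof -
  let ?q = "CARD('a)" and ?d = "vec.dim W" and ?ker = "{v\<in>W. dotp x v = 0}"
  have q: "?q \<ge> 2" by (rule card_finite_field_ge_2)
  have "card W = card ({v\<in>W. dotp x v \<noteq> 0} \<union> ?ker)"
    by (rule arg_cong[where f = card]) auto
  also have "\<dots> = card {v\<in>W. dotp x v \<noteq> 0} + card ?ker"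
    by (rule card_Un_disjoint) auto
  finally have "card W = card {v\<in>W. dotp x v \<noteq> 0} + card ?ker" .
  then have "?q ^ ?d = ?q * card ?ker"
    using card_subspace[OF W] card_dotp_nonzero_eq_card_dotp_zero[OF W w] q
    by (simp add: algebra_simps)
  moreover obtain d where "?d = Suc d"
    using w by (cases ?d) (auto simp: vec.dim_eq_0)
  ultimately have "card ?ker = ?q ^ (?d - 1)"
    using q by simp
  then show ?thesis
    using card_dotp_nonzero_eq_card_dotp_zero[OF W w] by simp
qed

lemma card_dotp_nonzero:
  fixes x :: "'a::{field,finite} ^ 'n::finite"
  assumes "x \<noteq> 0"
  shows "card {v. dotp x v \<noteq> 0} = (CARD('a) - 1) * CARD('a) ^ (CARD('n) - 1)"
proof -
  obtain i where "x $ i \<noteq> 0"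
    using assms by (auto simp: vec_eq_iff)
  moreover have "dotp x (axis i 1) = x $ i"
  proof -
    have "dotp x (axis i 1) = (\<Sum>j\<in>UNIV. if j = i then x $ j else 0)"
      unfolding dotp_def by (rule sum.cong) (auto simp: axis_def)
    then show ?thesis by simp
  qed
  ultimately show ?thesis
    using card_subspace_dotp_nonzero[OF vec.subspace_UNIV, of "axis i 1" x, unfolded vec_dim_card]
    by simp
qed

lemma sum_card_filter_swap:
  assumes "finite A" "finite B"
  shows "(\<Sum>x\<in>A. card {y\<in>B. P x y}) = (\<Sum>y\<in>B. card {x\<in>A. P x y})"
proof -
  have "(\<Sum>x\<in>A. card {y\<in>B. P x y}) = (\<Sum>x\<in>A. \<Sum>y\<in>B. if P x y then 1 else 0)"
    using assms by (simp add: sum.inter_filter[symmetric])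
  also have "\<dots> = (\<Sum>y\<in>B. \<Sum>x\<in>A. if P x y then 1 else 0)"
    by (rule sum.swap)
  also have "\<dots> = (\<Sum>y\<in>B. card {x\<in>A. P x y})"
    using assms by (simp add: sum.inter_filter[symmetric])
  finally show ?thesis .
qed

lemma card_annihilator:
  fixes W :: "('a::{field,finite} ^ 'n::finite) set"
  assumes W: "vec.subspace W"
  shows "card (annihilator W) = CARD('a) ^ (CARD('n) - vec.dim W)"
proof (cases "vec.dim W = 0")
  case True
  then have "annihilator W = UNIV"
    by (auto simp: annihilator_def)
  then show ?thesis
    unfolding True by (simp add: CARD_vec)
next
  case False
  let ?q = "CARD('a)" and ?k = "CARD('n)" and ?d = "vec.dim W"
  obtain d where d: "?d = Suc d"
    using False by (cases ?d) auto
  obtain e where e: "?k = ?d + e"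
    using dim_subset_UNIV_cart_gen[of W] by (auto simp: le_iff_add)
  define Z where "Z = annihilator W"
  define a where "a = ?q ^ e"
  define P where "P = ?q ^ d"
  have powers: "?q ^ ?k = a * ?q * P" "?q ^ (?k - 1) = a * P" "?q ^ ?d = ?q * P"
    unfolding a_def P_def e d by (simp_all add: power_add)
  have q: "?q \<ge> 2" "P > 0"
    using card_finite_field_ge_2 by (auto simp: P_def)
  \<comment> \<open>count the pairs (x, v) with v \<in> W and x \<cdot> v \<noteq> 0 in two ways\<close>
  have "card (UNIV - Z) * ((?q - 1) * P) = (\<Sum>x\<in>UNIV. if x \<in> Z then 0 else (?q - 1) * P)"
    by (simp add: sum.If_cases Compl_eq_Diff_UNIV)
  also have "\<dots> = (\<Sum>x\<in>UNIV. card {v\<in>W. dotp x v \<noteq> 0})"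
  proof (rule sum.cong)
    fix x :: "'a ^ 'n"
    show "(if x \<in> Z then 0 else (?q - 1) * P) = card {v\<in>W. dotp x v \<noteq> 0}"
      using card_subspace_dotp_nonzero[OF W, of _ x] by (auto simp: Z_def annihilator_def P_def d)
  qed simp
  also have "\<dots> = (\<Sum>v\<in>W. card {x. dotp x v \<noteq> 0})"
    using sum_card_filter_swap[of UNIV W "\<lambda>x v. dotp x v \<noteq> 0"] by simp
  also have "\<dots> = (\<Sum>v\<in>W. if v = 0 then 0 else (?q - 1) * (a * P))"
  proof (rule sum.cong)
    fix v :: "'a ^ 'n"
    show "card {x. dotp x v \<noteq> 0} = (if v = 0 then 0 else (?q - 1) * (a * P))"
      using card_dotp_nonzero[of v] powers(2) by (simp add: dotp_commute)
  qed simp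
  also have "\<dots> = card (W - {0}) * ((?q - 1) * (a * P))"
    by (simp add: sum.If_cases Diff_eq)
  finally have "card (UNIV - Z) * P = card (W - {0}) * (a * P)"
    using q by simp
  then have "card (UNIV - Z) = (?q * P - 1) * a"
    using q powers(3) vec.subspace_0[OF W] card_subspace[OF W] by (simp add: card_Diff_subset)
  moreover have "card (UNIV - Z) = a * ?q * P - card Z"
    using powers(1) by (simp add: card_Diff_subset CARD_vec)
  moreover have "card Z \<le> a * ?q * P"
    using powers(1) card_mono[of UNIV Z] by (simp add: CARD_vec)
  moreover have "a \<le> a * ?q * P"
    using q by simp
  moreover have "(?q * P - 1) * a = a * ?q * P - a"
    unfolding diff_mult_distrib by (simp add: mult_ac)
  ultimately have "card Z = a"
    by linarith
  then show ?thesis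
    by (simp add: Z_def a_def e)
qed

lemma exists_nonzero_outside_annihilators:
  fixes Us :: "'i \<Rightarrow> ('a::{field,finite} ^ 'n::finite) set"
  assumes I: "finite I" "card I \<le> CARD('a) ^ u" and u: "u \<ge> 1"
    and subspace: "\<And>i. i \<in> I \<Longrightarrow> vec.subspace (Us i)"
    and dim: "\<And>i. i \<in> I \<Longrightarrow> vec.dim (Us i) = u"
  obtains x where "x \<noteq> 0" "\<And>i. i \<in> I \<Longrightarrow> x \<notin> annihilator (Us i)"
proof (cases "I = {}")
  case True
  have "axis undefined 1 \<noteq> (0 :: 'a ^ 'n)"
    by (simp add: vec_eq_iff axis_def)
  with True that show thesis by blast
next
  case False
  let ?q = "CARD('a)" and ?k = "CARD('n)"
  have "2 \<le> ?q"
    by (rule card_finite_field_ge_2)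
  then have q: "2 \<le> ?q" "2 \<le> ?q ^ u"
    using power_increasing[of 1 u ?q] u by auto
  obtain e where k: "?k = u + e"
    using False dim dim_subset_UNIV_cart_gen by (metis ex_in_conv le_iff_add)
  have "card (\<Union>i\<in>I. annihilator (Us i) - {0}) \<le> (\<Sum>i\<in>I. card (annihilator (Us i) - {0}))"
    by (rule card_UN_le[OF I(1)])
  also have "\<dots> = (\<Sum>i\<in>I. ?q ^ e - 1)"
    by (rule sum.cong) (simp_all add: card_Diff_singleton card_annihilator subspace dim k)
  also have "\<dots> = card I * (?q ^ e - 1)"
    by simp
  also have "\<dots> \<le> ?q ^ u * (?q ^ e - 1)"
    using I(2) by (rule mult_right_mono) simp
  also have "\<dots> < ?q ^ ?k - 1"
  proof -
    have "?q ^ u * (?q ^ e - 1) = ?q ^ ?k - ?q ^ u"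
      by (simp add: k power_add diff_mult_distrib2)
    moreover have "?q ^ u \<le> ?q ^ ?k"
      using q by (simp add: k power_add)
    ultimately show ?thesis
      using q by linarith
  qed
  also have "\<dots> = card (UNIV - {0 :: 'a ^ 'n})"
    by (simp add: card_Diff_singleton CARD_vec)
  finally have "\<not> UNIV - {0} \<subseteq> (\<Union>i\<in>I. annihilator (Us i) - {0})"
    by (meson card_mono finite not_le)
  with that show thesis by blast
qed

lemma dim_gen_code:
  fixes G :: "'a::field ^ 'm::finite ^ 'n::finite"
  assumes "\<And>x. x \<noteq> 0 \<Longrightarrow> x v* G \<noteq> 0"
  shows "vec.dim (gen_code G) = CARD('n)"
proof -
  have "(\<lambda>x. x v* G) = (*v) (transpose G)"
    by (simp add: fun_eq_iff)
  then have linear: "Vector_Spaces.linear (*s) (*s) (\<lambda>x. x v* G)"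
    by simp
  have "inj (\<lambda>x. x v* G)"
  proof (rule injI)
    fix x y assume "x v* G = y v* G"
    then have "(x - y) v* G = 0"
      by (simp add: vec.linear_diff[OF linear])
    then show "x = y"
      using assms[of "x - y"] by auto
  qed
  then have "vec.dim ((\<lambda>x. x v* G) ` UNIV) = vec.dim (UNIV :: ('a ^ 'n) set)"
    by (intro vec.dim_image_eq[OF linear]) (auto intro: inj_on_subset)
  then show ?thesis
    unfolding gen_code_def vec_dim_card .
qed

lemma min_dist_gen_code_eqI:
  fixes G :: "'a::field ^ 'm::finite ^ 'n::finite"
  assumes lower: "\<And>x. x \<noteq> 0 \<Longrightarrow> d \<le> hamming_wt (x v* G)"
    and attained: "hamming_wt (x\<^sub>0 v* G) = d" and "d > 0"
  shows "min_dist (gen_code G) = d"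
  unfolding min_dist_def
proof (rule Min_eqI)
  show "finite {hamming_wt c |c. c \<in> gen_code G \<and> c \<noteq> 0}"
    by (rule finite_subset[of _ "{..CARD('m)}"]) (auto simp: hamming_wt_def card_mono)
  show "d \<le> w" if w: "w \<in> {hamming_wt c |c. c \<in> gen_code G \<and> c \<noteq> 0}" for w
  proof -
    obtain x where "w = hamming_wt (x v* G)" "x v* G \<noteq> 0"
      using w by (auto simp: gen_code_def)
    moreover from this(2) have "x \<noteq> 0"
      by auto
    ultimately show ?thesis
      using lower by simp
  qed
  have "hamming_wt (x\<^sub>0 v* G) \<noteq> 0"
    using attained \<open>d > 0\<close> by simp
  then have "x\<^sub>0 v* G \<noteq> 0"
    by simp
  then show "d \<in> {hamming_wt c |c. c \<in> gen_code G \<and> c \<noteq> 0}"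
    using attained unfolding gen_code_def by blast
qed

lemma card_outside_union_add_sum:
  fixes Us :: "'i \<Rightarrow> 'a::{zero,finite} set"
  assumes "finite I" and disjoint: "\<And>i j. i \<in> I \<Longrightarrow> j \<in> I \<Longrightarrow> i \<noteq> j \<Longrightarrow> Us i \<inter> Us j \<subseteq> {0}"
    and "\<not> P 0"
  shows "card {v. P v \<and> v \<notin> (\<Union>i\<in>I. Us i)} + (\<Sum>i\<in>I. card {v\<in>Us i. P v}) = card {v. P v}"
proof -
  let ?outside = "{v. P v \<and> v \<notin> (\<Union>i\<in>I. Us i)}" and ?inside = "\<Union>i\<in>I. {v\<in>Us i. P v}"
  have "card ?inside = (\<Sum>i\<in>I. card {v\<in>Us i. P v})"
  proof (rule card_UN_disjoint)
    show "\<forall>i\<in>I. \<forall>j\<in>I. i \<noteq> j \<longrightarrow> {v\<in>Us i. P v} \<inter> {v\<in>Us j. P v} = {}"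
    proof (intro ballI impI)
      fix i j assume "i \<in> I" "j \<in> I" "i \<noteq> j"
      then have "Us i \<inter> Us j \<subseteq> {0}"
        by (rule disjoint)
      then show "{v\<in>Us i. P v} \<inter> {v\<in>Us j. P v} = {}"
        using \<open>\<not> P 0\<close> by auto
    qed
  qed (simp_all add: \<open>finite I\<close>)
  moreover have "{v. P v} = ?outside \<union> ?inside" and "?outside \<inter> ?inside = {}"
    by blast+
  ultimately show ?thesis
    by (simp add: card_Un_disjoint)
qed

lemma card_scale_invariant_eq_card_columns:
  fixes G :: "'a::{field,finite} ^ 'm::finite ^ 'n::finite"
  assumes scale_closed: "\<And>v c. v \<in> U \<Longrightarrow> c \<noteq> 0 \<Longrightarrow> c *s v \<in> U" and "0 \<notin> U"
    and columns_in: "\<And>j. column j G \<in> U"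
    and columns_represent: "\<And>v. v \<in> U \<Longrightarrow> \<exists>!j. \<exists>c. c \<noteq> 0 \<and> column j G = c *s v"
    and P_scale: "\<And>v c. c \<noteq> 0 \<Longrightarrow> P (c *s v) \<longleftrightarrow> P v"
  shows "card {v\<in>U. P v} = (CARD('a) - 1) * card {j. P (column j G)}"
proof -
  let ?f = "\<lambda>(c, j). c *s column j G"
  have same_column: "j = j'" if "column j G = c *s column j' G" "c \<noteq> 0" for j j' c
  proof -
    have "column j' G = 1 *s column j' G"
      by simp
    then show ?thesis
      using that columns_represent[OF columns_in[of j']] one_neq_zero by blast
  qed
  have inj: "inj_on ?f ({c. c \<noteq> 0} \<times> {j. P (column j G)})"
  proof (rule inj_onI, clarsimp)
    fix c c' j j'
    assume c: "c \<noteq> 0" "c' \<noteq> 0" and eq: "c *s column j G = c' *s column j' G"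
    then have "inverse c *s (c *s column j G) = inverse c *s (c' *s column j' G)"
      by simp
    then have "column j G = (inverse c * c') *s column j' G"
      using c by (simp add: vector_smult_assoc)
    then have "j = j'"
      using c by (auto intro: same_column)
    moreover have "column j G \<noteq> 0"
      using columns_in[of j] \<open>0 \<notin> U\<close> by auto
    ultimately show "c = c' \<and> j = j'"
      using eq by (simp add: vec.scale_cancel_right)
  qed
  have image: "?f ` ({c. c \<noteq> 0} \<times> {j. P (column j G)}) = {v\<in>U. P v}"
  proof
    show "?f ` ({c. c \<noteq> 0} \<times> {j. P (column j G)}) \<subseteq> {v\<in>U. P v}"
      using scale_closed columns_in P_scale by auto
    show "{v\<in>U. P v} \<subseteq> ?f ` ({c. c \<noteq> 0} \<times> {j. P (column j G)})"
    proof
      fix v assume v: "v \<in> {v\<in>U. P v}"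
      then obtain j c where jc: "c \<noteq> 0" "column j G = c *s v"
        using columns_represent by blast
      then have "v = ?f (1 / c, j)"
        by simp
      moreover have "(1 / c, j) \<in> {c. c \<noteq> 0} \<times> {j. P (column j G)}"
        using jc v P_scale by simp
      ultimately show "v \<in> ?f ` ({c. c \<noteq> 0} \<times> {j. P (column j G)})"
        by (rule image_eqI)
    qed
  qed
  have "card {v\<in>U. P v} = card ({c::'a. c \<noteq> 0} \<times> {j. P (column j G)})"
    using card_image[OF inj] by (simp add: image)
  then show ?thesis
    by (simp add: card_cartesian_product card_nonzero_scalars)
qed

lemma mult_power_less_power_if_diff_gt:
  fixes q h k u :: nat
  assumes gt: "int q ^ k - int q ^ (k - 1) > int h * (int q ^ u - 1)"
    and "q \<ge> 1" "k \<ge> 1" "u \<ge> 1"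
  shows "h * q ^ (u - 1) < q ^ (k - 1)"
proof -
  define A where "A = int q ^ (k - 1)"
  define P where "P = int q ^ (u - 1)"
  have "int q ^ k = int q * A" "int q ^ u = int q * P"
    using assms(3,4) by (simp_all add: A_def P_def flip: power_Suc)
  then have gt': "int q * A - A > int h * (int q * P - 1)"
    using gt unfolding A_def by simp
  have "P \<ge> 1"
    using \<open>q \<ge> 1\<close> by (simp add: P_def)
  then have "int h * (int q * P - 1) \<ge> int h * (int q * P - P)"
    by (intro mult_left_mono) auto
  moreover have "(int q - 1) * (A - int h * P) = int q * A - A - int h * (int q * P - P)"
    by (simp add: algebra_simps)
  ultimately have "(int q - 1) * (A - int h * P) > 0"
    using gt' by linarith
  then have "A - int h * P > 0"
    using \<open>q \<ge> 1\<close> by (simp add: zero_less_mult_iff)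
  then show ?thesis
    by (simp add: A_def P_def flip: of_nat_power of_nat_mult)
qed

locale subspace_complement_code =
  fixes Us :: "nat \<Rightarrow> ('a::{field,finite} ^ 'n::finite) set"
    and h u :: nat
    and U :: "('a ^ 'n) set"
    and G :: "'a ^ 'm::finite ^ 'n"
  assumes subspace: "\<And>i. i \<in> {1..h} \<Longrightarrow> vec.subspace (Us i)"
    and dim: "\<And>i. i \<in> {1..h} \<Longrightarrow> vec.dim (Us i) = u"
    and disjoint: "\<And>i j. i \<in> {1..h} \<Longrightarrow> j \<in> {1..h} \<Longrightarrow> i \<noteq> j \<Longrightarrow> Us i \<inter> Us j = {0}"
    and U_def: "U = {v. v \<noteq> 0 \<and> v \<notin> (\<Union>i\<in>{1..h}. Us i)}"
    and columns_in: "\<And>j. column j G \<in> U"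
    and columns_represent: "\<And>v. v \<in> U \<Longrightarrow> \<exists>!j. \<exists>c. c \<noteq> 0 \<and> column j G = c *s v"
begin

lemma scale_mem_U:
  assumes "v \<in> U" "c \<noteq> 0"
  shows "c *s v \<in> U"
proof -
  have "v = inverse c *s (c *s v)"
    using \<open>c \<noteq> 0\<close> by simp
  then have "c *s v \<notin> Us i" if "i \<in> {1..h}" for i
    using assms vec.subspace_scale[OF subspace[OF that], of "c *s v" "inverse c"] that
    by (auto simp: U_def)
  then show ?thesis
    using assms by (auto simp: U_def)
qed

lemma card_columns_add_sum:
  assumes "\<not> P 0" and P_scale: "\<And>v c. c \<noteq> 0 \<Longrightarrow> P (c *s v) \<longleftrightarrow> P v"
  shows "(CARD('a) - 1) * card {j. P (column j G)} + (\<Sum>i\<in>{1..h}. card {v\<in>Us i. P v}) = card {v. P v}"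
proof -
  have "0 \<notin> U"
    by (simp add: U_def)
  then have "(CARD('a) - 1) * card {j. P (column j G)} = card {v\<in>U. P v}"
    using card_scale_invariant_eq_card_columns[OF scale_mem_U _ columns_in columns_represent P_scale]
    by simp
  also have "{v\<in>U. P v} = {v. P v \<and> v \<notin> (\<Union>i\<in>{1..h}. Us i)}"
    using \<open>\<not> P 0\<close> by (auto simp: U_def)
  finally show ?thesis
    using card_outside_union_add_sum[of "{1..h}" Us P] disjoint \<open>\<not> P 0\<close> by simp
qed

lemma length_eq:
  "(CARD('a) - 1) * CARD('m) + h * (CARD('a) ^ u - 1) = CARD('a) ^ CARD('n) - 1"
proof -
  have "{j. column j G \<noteq> 0} = UNIV"
    using columns_in by (auto simp: U_def)
  moreover have "card {v\<in>Us i. v \<noteq> 0} = CARD('a) ^ u - 1" if "i \<in> {1..h}" for i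
  proof -
    have "{v\<in>Us i. v \<noteq> 0} = Us i - {0}"
      by auto
    then show ?thesis
      using card_subspace[OF subspace[OF that]] vec.subspace_0[OF subspace[OF that]] dim[OF that]
      by (simp add: card_Diff_singleton)
  qed
  moreover have "card {v :: 'a ^ 'n. v \<noteq> 0} = CARD('a) ^ CARD('n) - 1"
  proof -
    have "{v :: 'a ^ 'n. v \<noteq> 0} = UNIV - {0}"
      by auto
    then show ?thesis
      by (simp add: card_Diff_singleton CARD_vec)
  qed
  ultimately show ?thesis
    using card_columns_add_sum[of "\<lambda>v. v \<noteq> 0"] by simp
qed

lemma weight_eq:
  assumes "x \<noteq> 0"
  shows "hamming_wt (x v* G) + card {i\<in>{1..h}. x \<notin> annihilator (Us i)} * CARD('a) ^ (u - 1)
    = CARD('a) ^ (CARD('n) - 1)"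
proof -
  let ?q = "CARD('a)" and ?M = "{i\<in>{1..h}. x \<notin> annihilator (Us i)}"
  have "hamming_wt (x v* G) = card {j. dotp x (column j G) \<noteq> 0}"
    by (simp add: hamming_wt_def vector_matrix_mult_nth_column)
  moreover have "(\<Sum>i\<in>{1..h}. card {v\<in>Us i. dotp x v \<noteq> 0})
      = (\<Sum>i\<in>{1..h}. if i \<in> ?M then (?q - 1) * ?q ^ (u - 1) else 0)"
  proof (rule sum.cong)
    fix i assume i: "i \<in> {1..h}"
    show "card {v\<in>Us i. dotp x v \<noteq> 0} = (if i \<in> ?M then (?q - 1) * ?q ^ (u - 1) else 0)"
      using card_subspace_dotp_nonzero[OF subspace[OF i], of _ x] dim[OF i] i
      by (auto simp: annihilator_def)
  qed simp
  moreover have "(\<Sum>i\<in>{1..h}. if i \<in> ?M then (?q - 1) * ?q ^ (u - 1) else 0) = card ?M * ((?q - 1) * ?q ^ (u - 1))"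
    by (simp add: sum.If_cases Int_def)
  ultimately have "(?q - 1) * (hamming_wt (x v* G) + card ?M * ?q ^ (u - 1)) = (?q - 1) * ?q ^ (CARD('n) - 1)"
    using card_columns_add_sum[of "\<lambda>v. dotp x v \<noteq> 0"] card_dotp_nonzero[OF assms]
    by (simp add: dotp_scale_right algebra_simps)
  moreover have "?q - 1 \<noteq> 0"
    using card_finite_field_ge_2[where 'a = 'a] by simp
  ultimately show ?thesis
    by simp
qed

lemma weight_ge:
  assumes "x \<noteq> 0"
  shows "CARD('a) ^ (CARD('n) - 1) - h * CARD('a) ^ (u - 1) \<le> hamming_wt (x v* G)"
proof -
  let ?M = "{i\<in>{1..h}. x \<notin> annihilator (Us i)}"
  have "card ?M \<le> card {1..h}"
    by (rule card_mono) auto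
  then have "card ?M * CARD('a) ^ (u - 1) \<le> h * CARD('a) ^ (u - 1)"
    by (simp add: mult_le_mono1)
  then show ?thesis
    using weight_eq[OF assms] by linarith
qed

lemma dim_eq:
  assumes "h * CARD('a) ^ (u - 1) < CARD('a) ^ (CARD('n) - 1)"
  shows "vec.dim (gen_code G) = CARD('n)"
proof (rule dim_gen_code)
  fix x :: "'a ^ 'n" assume "x \<noteq> 0"
  then have "hamming_wt (x v* G) \<noteq> 0"
    using weight_ge assms by fastforce
  then show "x v* G \<noteq> 0"
    by simp
qed

lemma min_dist_eq:
  assumes "h * CARD('a) ^ (u - 1) < CARD('a) ^ (CARD('n) - 1)" and "h \<le> CARD('a) ^ u" and "u \<ge> 1"
  shows "min_dist (gen_code G) = CARD('a) ^ (CARD('n) - 1) - h * CARD('a) ^ (u - 1)"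
proof -
  obtain x\<^sub>0 where "x\<^sub>0 \<noteq> 0" and "\<And>i. i \<in> {1..h} \<Longrightarrow> x\<^sub>0 \<notin> annihilator (Us i)"
    using exists_nonzero_outside_annihilators[of "{1..h}" u Us] assms subspace dim by auto
  then have "{i\<in>{1..h}. x\<^sub>0 \<notin> annihilator (Us i)} = {1..h}"
    by auto
  then have "hamming_wt (x\<^sub>0 v* G) + h * CARD('a) ^ (u - 1) = CARD('a) ^ (CARD('n) - 1)"
    using weight_eq[OF \<open>x\<^sub>0 \<noteq> 0\<close>] by simp
  then have "hamming_wt (x\<^sub>0 v* G) = CARD('a) ^ (CARD('n) - 1) - h * CARD('a) ^ (u - 1)"
    by simp
  moreover have "CARD('a) ^ (CARD('n) - 1) - h * CARD('a) ^ (u - 1) > 0"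
    using assms(1) by simp
  ultimately show ?thesis
    using weight_ge by (rule min_dist_gen_code_eqI[rotated])
qed

end

theorem theorem2p2:
  fixes Us :: "nat \<Rightarrow> ('a::{field,finite} ^ 'n::finite) set"
    and G :: "'a ^ 'm::finite ^ 'n"
    and q k u h :: nat
  assumes q_def: "q = CARD('a)"
    and k_def: "k = CARD('n)"
    and k3: "k \<ge> 3" and u2: "u \<ge> 2" and h1: "h \<ge> 1"
    and sub: "\<And>i. i \<in> {1..h} \<Longrightarrow> vec.subspace (Us i)"
    and dimU: "\<And>i. i \<in> {1..h} \<Longrightarrow> vec.dim (Us i) = u"
    and disj: "\<And>i j. i \<in> {1..h} \<Longrightarrow> j \<in> {1..h} \<Longrightarrow> i \<noteq> j \<Longrightarrow> Us i \<inter> Us j = {0}"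
    and cond: "int q ^ k - int q ^ (k - 1) > int h * (int q ^ u - 1)"
    and U_def: "U = {v :: 'a ^ 'n. v \<noteq> 0 \<and> v \<notin> (\<Union>i\<in>{1..h}. Us i)}"
    and cols_in: "\<And>j. column j G \<in> U"
    and cols_rep: "\<And>v. v \<in> U \<Longrightarrow> \<exists>!j. \<exists>c. c \<noteq> 0 \<and> column j G = c *s v"
    and hq: "h \<le> q ^ u"
  shows "real CARD('m) = (real (q ^ k - 1) - real h * real (q ^ u - 1)) / real (q - 1)
         \<and> vec.dim (gen_code G) = k
         \<and> int (min_dist (gen_code G)) = int q ^ (k - 1) - int h * int q ^ (u - 1)"
proof -
  interpret subspace_complement_code Us h u U G
    by unfold_locales (fact sub dimU disj U_def cols_in cols_rep)+
  have q: "q \<ge> 2"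
    unfolding q_def by (rule card_finite_field_ge_2)
  have bound: "h * q ^ (u - 1) < q ^ (k - 1)"
    using mult_power_less_power_if_diff_gt[OF cond] q k3 u2 by simp
  have "real (q - 1) * real CARD('m) = real (q ^ k - 1) - real h * real (q ^ u - 1)"
    using length_eq unfolding q_def k_def
    by (metis add_diff_cancel_right' of_nat_add of_nat_mult)
  then have "real CARD('m) = (real (q ^ k - 1) - real h * real (q ^ u - 1)) / real (q - 1)"
    using q by (simp add: field_simps)
  moreover have "vec.dim (gen_code G) = k"
    using dim_eq bound unfolding q_def k_def by simp
  moreover have "min_dist (gen_code G) = q ^ (k - 1) - h * q ^ (u - 1)"
    using min_dist_eq bound hq u2 unfolding q_def k_def by simp
  ultimately show ?thesis
    using bound by (simp add: of_nat_diff)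
qed

end
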